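(* Let $S$ and $T$ be valid configurations of $n\ge 2$ points each whose smallest enclosing discs have a common center, placed at the origin. Let $\delta$ be a direction forming an angle of at least $\pi/(24n)$ with every direction in $\Delta_S\cup\Delta_T$, and rotate coordinates so that $\delta$ is the positive $x$-direction. Let $s_1,\dots,s_n=\Pi_\delta(S)$ and $t_1,\dots,t_n=\Pi_\delta(T)$, and let $M_\delta(s_i)=t_i$. Then the translation $\vec v=\bigl((r(S)+r(T)+2)(1+8n),\,0\bigr)$ is valid with respect to $M_\delta$, and moreover the ordering $s_1,\dots,s_n$ yields a valid itinerary from $S$ to $T+\vec v$ with respect to $M_\delta$.
   Context: For $p\in\mathbb R^2$, $D(p)$ is the open unit disc centered at $p$. A configuration is a finite set of points in $\mathbb R^2$; it is valid if any two distinct points are at distance at least $2$. $r(P)$ is the radius of the smallest closed disc containing the point set $P$. Two distinct points $p,q\in S$ are Delaunay neighbors if there is a closed disc whose boundary passes through $p$ and $q$ and whose interior contains no point of $S$. $\Delta_S$ is the set of directions consisting of, for every pair of Delaunay neighbors $s,s'\in S$, the directions of the two common inner tangent lines of $D(s)$ and $D(s')$, each taken with both orientations; $\Delta_T$ is defined analogously. $\Pi_\delta(C)$ orders $C$ by decreasing $x$-coordinate, ties broken by decreasing $y$-coordinate. Given a bijection $M:S\to T$ and translation $\vec v$, an ordering $s_1,\dots,s_n$ of $S$ yields a valid itinerary if for each $i$, $\mathrm{conv}(D(s_i)\cup D(M(s_i)+\vec v))$ is disjoint from $D(s_j)$ for $j>i$ and from $D(M(s_j)+\vec v)$ for $j<i$;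 $\vec v$ is valid w.r.t. $M$ if some ordering yields a valid itinerary. *)

theory Defs
  imports "HOL-Analysis.Analysis"
begin

type_synonym point = "real \<times> real"

definition D :: "point \<Rightarrow> point set" where
  "D p = ball p 1"

definition valid_config :: "point set \<Rightarrow> bool" where
  "valid_config S \<longleftrightarrow> finite S \<and> (\<forall>p\<in>S. \<forall>q\<in>S. p \<noteq> q \<longrightarrow> dist p q \<ge> 2)"

definition rad :: "point set \<Rightarrow> real" where
  "rad P = Inf {\<rho>. \<rho> \<ge> 0 \<and> (\<exists>c. P \<subseteq> cball c \<rho>)}"

definition sed_center :: "point set \<Rightarrow> point \<Rightarrow> bool" where
  "sed_center P c \<longleftrightarrow> P \<subseteq> cball c (rad P)"

definition delaunay_nb :: "point set \<Rightarrow> point \<Rightarrow> point \<Rightarrow> bool" where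
  "delaunay_nb S p q \<longleftrightarrow> p \<in> S \<and> q \<in> S \<and> p \<noteq> q \<and>
     (\<exists>c \<rho>. dist c p = \<rho> \<and> dist c q = \<rho> \<and> ball c \<rho> \<inter> S = {})"

text \<open>2D cross product; for a unit vector u, cross u (p - a) is the signed distance of p
  from the line through a with direction u.\<close>
definition cross :: "point \<Rightarrow> point \<Rightarrow> real" where
  "cross x y = fst x * snd y - snd x * fst y"

text \<open>Directions (unit vectors) of the common inner tangent lines of D(s), D(s') for all
  Delaunay neighbours s, s' of S, in both orientations: the line through a with direction u
  is at distance 1 from both centres, which lie on opposite sides of it.\<close>
definition Delta :: "point set \<Rightarrow> point set" where
  "Delta S = {u. norm u = 1 \<and> (\<exists>s s' a. delaunay_nb S s s' \<and>
      ((cross u (s - a) = 1 \<and> cross u (s' - a) = -1) \<or>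
       (cross u (s - a) = -1 \<and> cross u (s' - a) = 1)))}"

definition dir_angle :: "point \<Rightarrow> point \<Rightarrow> real" where
  "dir_angle u w = arccos (u \<bullet> w)"

text \<open>Rotation by +90 degrees: in coordinates where \<delta> is the positive x-direction,
  perp \<delta> is the positive y-direction.\<close>
definition perp :: "point \<Rightarrow> point" where
  "perp u = (- snd u, fst u)"

definition before :: "point \<Rightarrow> point \<Rightarrow> point \<Rightarrow> bool" where
  "before \<delta> p q \<longleftrightarrow> p \<bullet> \<delta> > q \<bullet> \<delta> \<or> (p \<bullet> \<delta> = q \<bullet> \<delta> \<and> p \<bullet> perp \<delta> > q \<bullet> perp \<delta>)"

definition Pi_ord :: "point \<Rightarrow> point set \<Rightarrow> point list" where
  "Pi_ord \<delta> C = (THE xs. distinct xs \<and> set xs = C \<and> sorted_wrt (before \<delta>) xs)"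

definition M_delta :: "point \<Rightarrow> point set \<Rightarrow> point set \<Rightarrow> point \<Rightarrow> point" where
  "M_delta \<delta> S T s = Pi_ord \<delta> T ! (THE i. i < length (Pi_ord \<delta> S) \<and> Pi_ord \<delta> S ! i = s)"

definition valid_itinerary :: "(point \<Rightarrow> point) \<Rightarrow> point \<Rightarrow> point list \<Rightarrow> bool" where
  "valid_itinerary M v ss \<longleftrightarrow>
     (\<forall>i < length ss. \<forall>j < length ss.
        (i < j \<longrightarrow> convex hull (D (ss ! i) \<union> D (M (ss ! i) + v)) \<inter> D (ss ! j) = {}) \<and>
        (j < i \<longrightarrow> convex hull (D (ss ! i) \<union> D (M (ss ! i) + v)) \<inter> D (M (ss ! j) + v) = {}))"

definition valid_translation :: "point set \<Rightarrow> (point \<Rightarrow> point) \<Rightarrow> point \<Rightarrow> bool" where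
  "valid_translation S M v \<longleftrightarrow>
     (\<exists>ss. distinct ss \<and> set ss = S \<and> valid_itinerary M v ss)"

end

theory Submission
  imports Defs
begin

text \<open>The disc centred at s_i travels along the segment from s_i to t_i + v. Since v is long
  compared with r(S) + r(T), the direction w of that segment makes an angle less than
  \<pi>/(24n) with \<delta>, while every later s_j lies behind s_i in direction \<delta>. If the segment came
  within distance 2 of s_j, shrinking the component of w orthogonal to \<delta> would, by continuity,
  produce a common inner tangent direction of D(s_i) and D(s_j) even closer to \<delta>. The smallness
  of the angle also forces |s_j - s_i| < \<surd>8, so the empty disc on s_i s_j as diameter makes them
  Delaunay neighbours and the tangent direction lies in \<Delta>_S, contradicting the hypothesis on \<delta>.
  The targets t_j + v with j < i are handled in the same way with -\<delta> in place of \<delta>, and the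
  convex hull of the two discs lies in the open unit neighbourhood of the segment.\<close>

section \<open>Coordinates with respect to a unit direction\<close>

lemma unit_fst_snd: "norm (\<delta>::point) = 1 \<Longrightarrow> fst \<delta> * fst \<delta> + snd \<delta> * snd \<delta> = 1"
  by (cases \<delta>) (simp add: norm_Pair power2_eq_square)

lemma
  fixes d w \<delta> :: point
  assumes "norm \<delta> = 1"
  shows inner_eq_frame: "d \<bullet> w = (d \<bullet> \<delta>) * (w \<bullet> \<delta>) + cross \<delta> d * cross \<delta> w"
    and cross_eq_frame: "cross w d = (w \<bullet> \<delta>) * cross \<delta> d - cross \<delta> w * (d \<bullet> \<delta>)"
proof -
  obtain e1 e2 where e: "\<delta> = (e1, e2)" by (cases \<delta>)
  have h: "e1 * e1 + e2 * e2 = 1" using unit_fst_snd[OF assms] e by simp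
  have "(d \<bullet> \<delta>) * (w \<bullet> \<delta>) + cross \<delta> d * cross \<delta> w = (d \<bullet> w) * (e1 * e1 + e2 * e2)"
    and "(w \<bullet> \<delta>) * cross \<delta> d - cross \<delta> w * (d \<bullet> \<delta>) = cross w d * (e1 * e1 + e2 * e2)"
    by (cases d; cases w; simp add: e inner_prod_def cross_def algebra_simps)+
  then show "d \<bullet> w = (d \<bullet> \<delta>) * (w \<bullet> \<delta>) + cross \<delta> d * cross \<delta> w"
    and "cross w d = (w \<bullet> \<delta>) * cross \<delta> d - cross \<delta> w * (d \<bullet> \<delta>)"
    using h by simp_all
qed

lemma inner_self_eq_frame:
  fixes d \<delta> :: point
  assumes "norm \<delta> = 1"
  shows "d \<bullet> d = (d \<bullet> \<delta>)\<^sup>2 + (cross \<delta> d)\<^sup>2"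
  using inner_eq_frame[OF assms, of d d] by (simp add: power2_eq_square)

lemma cross_eq_inner_perp: "cross \<delta> d = d \<bullet> perp \<delta>"
  by (simp add: cross_def perp_def inner_prod_def algebra_simps)

lemma norm_perp [simp]: "norm (perp u) = norm u"
  by (cases u) (simp add: perp_def norm_Pair)

lemma cross_sq_add_inner_sq: "(cross w y)\<^sup>2 + (w \<bullet> y)\<^sup>2 = (w \<bullet> w) * (y \<bullet> y)"
  by (simp add: inner_prod_def cross_def power2_eq_square algebra_simps)

lemma inner_perp_self [simp]: "perp u \<bullet> u = 0" "u \<bullet> perp u = 0"
  by (simp_all add: perp_def inner_prod_def)

section \<open>Inner tangent directions\<close>

text \<open>Below, (a, b) and (W1, W2) are the coordinates of an offset d and a direction w in the frame
  (\<delta>, perp \<delta>). The line through 0 in direction (W1, s W2) is at distance 2 from d exactly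
  when the equation holds; at the parameter s0 making that direction orthogonal to d the
  distance is |d| \<ge> 2, and at s = 1 it is less than 2.\<close>

lemma tangent_parameter_exists:
  fixes a b W1 W2 :: real
  assumes a: "a \<le> 0" and far: "4 \<le> a*a + b*b" and W1: "0 < W1"
    and dw: "0 < a*W1 + b*W2" and near: "(W1*b - W2*a)\<^sup>2 < 4*(W1\<^sup>2 + W2\<^sup>2)"
  shows "\<exists>s. 0 \<le> s \<and> s \<le> 1 \<and> (W1*b - s*W2*a)\<^sup>2 = 4*(W1\<^sup>2 + s\<^sup>2*W2\<^sup>2)"
proof -
  have "a*W1 \<le> 0" using a W1 by (simp add: mult_nonpos_nonneg)
  with dw have bW2: "0 < W2*b" by (simp add: mult.commute)
  define s0 where "s0 = - (W1*a) / (W2*b)"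
  have s0: "0 \<le> s0" "s0 \<le> 1"
    using \<open>a*W1 \<le> 0\<close> dw bW2 by (simp_all add: s0_def mult.commute divide_nonpos_pos le_divide_eq)
  define g where "g s = (W1*b - s*W2*a)\<^sup>2 - 4*(W1\<^sup>2 + s\<^sup>2*W2\<^sup>2)" for s
  have lagrange: "(W1*b - s*W2*a)\<^sup>2 + (W1*a + s*W2*b)\<^sup>2 = (W1\<^sup>2 + s\<^sup>2*W2\<^sup>2)*(a*a + b*b)" for s
    by (simp add: power2_eq_square algebra_simps)
  have "W1*a + s0*W2*b = 0"
    using bW2 by (auto simp: s0_def field_simps)
  then have "(W1*b - s0*W2*a)\<^sup>2 = (W1\<^sup>2 + s0\<^sup>2*W2\<^sup>2)*(a*a + b*b)"
    using lagrange[of s0] by simp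
  also have "\<dots> \<ge> (W1\<^sup>2 + s0\<^sup>2*W2\<^sup>2)*4"
    using far by (intro mult_left_mono) auto
  finally have "0 \<le> g s0" by (simp add: g_def)
  moreover have "g 1 \<le> 0" using near by (simp add: g_def)
  moreover have "continuous_on {s0..1} g" unfolding g_def by (intro continuous_intros)
  ultimately obtain s where "s0 \<le> s" "s \<le> 1" "g s = 0"
    using IVT2'[of g 1 0 s0] s0 by auto
  then show ?thesis using s0 by (intro exI[of _ s]) (simp add: g_def)
qed

lemma sum_sq_lt_8_if_flat:
  fixes a b W1 W2 :: real
  assumes a: "a \<le> 0" and W1: "0 < W1" and dw: "0 < a*W1 + b*W2"
    and near: "(W1*b - W2*a)\<^sup>2 < 4*(W1\<^sup>2 + W2\<^sup>2)" and flat: "64*W2\<^sup>2 < W1\<^sup>2"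
  shows "a*a + b*b < 8"
proof -
  define k where "k = W2 / W1"
  have W2: "W2 = k*W1" using W1 by (simp add: k_def)
  have k: "k\<^sup>2 \<le> 1/64" using flat W1 by (simp add: W2 power_mult_distrib)
  have "0 < (a + b*k) * W1" using dw by (simp add: W2 algebra_simps)
  then have ab: "-a < b*k" using W1 by (simp add: zero_less_mult_iff)
  with a have bk: "0 < b*k" by linarith
  have "W1\<^sup>2 * (b - k*a)\<^sup>2 < W1\<^sup>2 * (4*(1 + k\<^sup>2))"
    using near by (simp add: W2 power2_eq_square algebra_simps)
  then have "(b - k*a)\<^sup>2 < 4*(1 + k\<^sup>2)"
    using W1 by (simp add: mult_less_cancel_left_pos)
  moreover have "b\<^sup>2 \<le> (b - k*a)\<^sup>2"
  proof -
    have "b*(k*a) \<le> 0" using bk a by (metis mult.assoc mult_nonneg_nonpos less_eq_real_def)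
    moreover have "(b - k*a)\<^sup>2 = b\<^sup>2 - 2*(b*(k*a)) + (k*a)\<^sup>2"
      by (simp add: power2_eq_square algebra_simps)
    ultimately show ?thesis using zero_le_power2[of "k*a"] by linarith
  qed
  ultimately have b: "b\<^sup>2 < 4*(1 + k\<^sup>2)" by linarith
  have "(-a)*(-a) \<le> (b*k)*(b*k)" using a ab by (intro mult_mono) auto
  then have "a*a + b*b \<le> b\<^sup>2*(1 + k\<^sup>2)" by (simp add: power2_eq_square algebra_simps)
  also have "\<dots> < 4*(1 + k\<^sup>2)*(1 + k\<^sup>2)" using b by (intro mult_strict_right_mono) (auto intro: add_pos_nonneg)
  also have "\<dots> \<le> 4*(1 + 1/64)*(1 + 1/64)" using k by (intro mult_mono) auto
  finally show ?thesis by simp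
qed

lemma tangent_direction_exists:
  fixes d w \<delta> :: point
  assumes \<delta>: "norm \<delta> = 1" and behind: "d \<bullet> \<delta> \<le> 0" and far: "4 \<le> d \<bullet> d"
    and fwd: "0 < w \<bullet> \<delta>" and dw: "0 < d \<bullet> w" and near: "(cross w d)\<^sup>2 < 4 * (w \<bullet> w)"
  obtains z where "z \<bullet> \<delta> = w \<bullet> \<delta>" "z \<bullet> z \<le> w \<bullet> w" "(cross z d)\<^sup>2 = 4 * (z \<bullet> z)"
proof -
  define a b W1 W2 where "a = d \<bullet> \<delta>" and "b = cross \<delta> d" and "W1 = w \<bullet> \<delta>" and "W2 = cross \<delta> w"
  have ids: "d \<bullet> w = a*W1 + b*W2" "cross w d = W1*b - W2*a" "d \<bullet> d = a*a + b*b"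
    "w \<bullet> w = W1\<^sup>2 + W2\<^sup>2"
    using inner_eq_frame[OF \<delta>, of d w] cross_eq_frame[OF \<delta>, where d=d and w=w]
      inner_eq_frame[OF \<delta>, of d d] inner_self_eq_frame[OF \<delta>, of w]
    by (simp_all add: a_def b_def W1_def W2_def)
  obtain s where s: "0 \<le> s" "s \<le> 1" "(W1*b - s*W2*a)\<^sup>2 = 4*(W1\<^sup>2 + s\<^sup>2*W2\<^sup>2)"
    using tangent_parameter_exists[of a b W1 W2] behind far fwd dw near ids
    by (auto simp: a_def W1_def)
  define z where "z = W1 *\<^sub>R \<delta> + (s*W2) *\<^sub>R perp \<delta>"
  have \<delta>\<delta>: "\<delta> \<bullet> \<delta> = 1" "perp \<delta> \<bullet> perp \<delta> = 1"
    using \<delta> by (simp_all add: norm_eq_1[symmetric])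
  have zd: "z \<bullet> \<delta> = W1" and zp: "cross \<delta> z = s*W2"
    using \<delta>\<delta> by (simp_all add: z_def cross_eq_inner_perp inner_add_left)
  have "z \<bullet> z = W1\<^sup>2 + s\<^sup>2*W2\<^sup>2"
    using inner_self_eq_frame[OF \<delta>, of z] by (simp add: zd zp power_mult_distrib)
  moreover have "cross z d = W1*b - s*W2*a"
    using cross_eq_frame[OF \<delta>, where d=d and w=z] by (simp add: zd zp a_def b_def)
  moreover have "s\<^sup>2*W2\<^sup>2 \<le> W2\<^sup>2"
    using s by (intro mult_left_le_one_le) (auto simp: power_le_one)
  ultimately show thesis
    using that[of z] zd s ids by (simp add: W1_def)
qed

lemma inner_self_lt_8_if_flat:
  fixes d w \<delta> :: point
  assumes \<delta>: "norm \<delta> = 1" and behind: "d \<bullet> \<delta> \<le> 0" and fwd: "0 < w \<bullet> \<delta>"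
    and dw: "0 < d \<bullet> w" and near: "(cross w d)\<^sup>2 < 4 * (w \<bullet> w)"
    and flat: "64 * (cross \<delta> w)\<^sup>2 < (w \<bullet> \<delta>)\<^sup>2"
  shows "d \<bullet> d < 8"
  using sum_sq_lt_8_if_flat[of "d \<bullet> \<delta>" "w \<bullet> \<delta>" "cross \<delta> d" "cross \<delta> w"] assms
    inner_eq_frame[OF \<delta>, of d w] cross_eq_frame[OF \<delta>, where d=d and w=w]
    inner_eq_frame[OF \<delta>, of d d] inner_self_eq_frame[OF \<delta>, of w]
  by simp

lemma delaunay_nb_if_close:
  assumes P: "valid_config P" and "p \<in> P" "q \<in> P" "p \<noteq> q" and close: "(dist p q)\<^sup>2 < 8"
  shows "delaunay_nb P p q"
proof -
  define c where "c = midpoint p q"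
  define \<rho> where "\<rho> = dist c p"
  have cq: "dist c q = \<rho>" by (simp add: \<rho>_def c_def dist_midpoint)
  have \<rho>: "4 * \<rho>\<^sup>2 = (dist p q)\<^sup>2" by (simp add: \<rho>_def c_def dist_midpoint power_divide)
  have "ball c \<rho> \<inter> P = {}"
  proof (rule ccontr)
    assume "ball c \<rho> \<inter> P \<noteq> {}"
    then obtain r where r: "r \<in> P" "dist c r < \<rho>" by auto
    then have "r \<noteq> p" "r \<noteq> q" using cq by (auto simp: \<rho>_def)
    then have "2 \<le> dist r p" "2 \<le> dist r q"
      using P r \<open>p \<in> P\<close> \<open>q \<in> P\<close> by (auto simp: valid_config_def)
    then have "4 \<le> (dist r p)\<^sup>2" "4 \<le> (dist r q)\<^sup>2"
      using power_mono[of 2 _ 2] by force+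
    moreover have "(dist r p)\<^sup>2 + (dist r q)\<^sup>2 = 2*(dist c r)\<^sup>2 + 2*\<rho>\<^sup>2"
      \<comment> \<open>Apollonius: the median from r to the side pq\<close>
      by (simp add: \<rho>_def c_def dist_norm midpoint_def power2_norm_eq_inner
          inner_diff inner_add inner_commute algebra_simps)
    moreover have "(dist c r)\<^sup>2 < \<rho>\<^sup>2" using r by (simp add: power_strict_mono)
    ultimately show False using \<rho> close by linarith
  qed
  then show ?thesis
    unfolding delaunay_nb_def using assms cq
    by (intro conjI exI[of _ c] exI[of _ \<rho>]) (auto simp: \<rho>_def dist_commute)
qed

lemma sgn_in_Delta:
  assumes nb: "delaunay_nb P p q" and "z \<noteq> 0"
    and tangent: "(cross z (q - p))\<^sup>2 = 4 * (z \<bullet> z)"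
  shows "sgn z \<in> Delta P"
proof -
  have "cross (sgn z) (q - p) = cross z (q - p) / norm z"
    by (simp add: sgn_div_norm cross_def divide_inverse algebra_simps)
  then have "(cross (sgn z) (q - p))\<^sup>2 = 2\<^sup>2"
    using tangent \<open>z \<noteq> 0\<close> by (simp add: power_divide power2_norm_eq_inner)
  then have "cross (sgn z) (q - p) = 2 \<or> cross (sgn z) (q - p) = -2"
    by (simp only: power2_eq_iff)
  moreover have "cross (sgn z) (p - midpoint p q) = - cross (sgn z) (q - p) / 2"
    and "cross (sgn z) (q - midpoint p q) = cross (sgn z) (q - p) / 2"
    by (simp_all add: midpoint_def cross_def algebra_simps)
  ultimately show ?thesis
    unfolding Delta_def using nb \<open>z \<noteq> 0\<close> norm_sgn[of z]
    by (intro CollectI conjI exI[of _ p] exI[of _ q] exI[of _ "midpoint p q"]) auto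
qed

lemma uminus_in_Delta:
  assumes "u \<in> Delta P"
  shows "- u \<in> Delta P"
proof -
  obtain s s' a where "norm u = 1" "delaunay_nb P s s'"
    "(cross u (s - a) = 1 \<and> cross u (s' - a) = -1) \<or> (cross u (s - a) = -1 \<and> cross u (s' - a) = 1)"
    using assms unfolding Delta_def by blast
  moreover have "cross (- u) y = - cross u y" for y by (simp add: cross_def)
  ultimately show ?thesis
    unfolding Delta_def mem_Collect_eq by (intro conjI exI[of _ s] exI[of _ s'] exI[of _ a]) auto
qed

lemma dir_angle_less:
  assumes "norm \<delta> = 1" "norm u = 1" and "cos x < \<delta> \<bullet> u" "0 \<le> x" "x \<le> pi"
  shows "dir_angle \<delta> u < x"
proof -
  have "\<delta> \<bullet> u \<le> 1" using norm_cauchy_schwarz[of \<delta> u] assms by simp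
  then have "arccos (\<delta> \<bullet> u) < arccos (cos x)"
    using assms by (intro arccos_less_arccos) auto
  then show ?thesis using arccos_cos assms by (simp add: dir_angle_def)
qed

text \<open>For the small
  angles used here the slope condition follows from the angle condition; stating it separately
  keeps trigonometry out of the geometric arguments.\<close>
definition in_cone :: "point \<Rightarrow> real \<Rightarrow> point \<Rightarrow> bool" where
  "in_cone \<delta> x w \<longleftrightarrow> 0 < w \<bullet> \<delta> \<and> 64 * (cross \<delta> w)\<^sup>2 < (w \<bullet> \<delta>)\<^sup>2 \<and> cos x * norm w < w \<bullet> \<delta>"

lemma in_cone_uminus [simp]: "in_cone (- \<delta>) x (- w) \<longleftrightarrow> in_cone \<delta> x w"
  by (simp add: in_cone_def cross_def)

lemma inner_ray_ge_4:
  fixes d w :: point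
  assumes "4 \<le> d \<bullet> d" "0 \<le> t" "w \<noteq> 0" and "d \<bullet> w \<le> 0 \<or> 4 * (w \<bullet> w) \<le> (cross w d)\<^sup>2"
  shows "4 \<le> (d - t *\<^sub>R w) \<bullet> (d - t *\<^sub>R w)"
  using assms(4)
proof
  assume "d \<bullet> w \<le> 0"
  then have "t * (d \<bullet> w) \<le> 0" "0 \<le> t * t * (w \<bullet> w)"
    using \<open>0 \<le> t\<close> by (simp_all add: mult_nonneg_nonpos)
  moreover have "(d - t *\<^sub>R w) \<bullet> (d - t *\<^sub>R w) = d \<bullet> d - 2*t*(d \<bullet> w) + t*t*(w \<bullet> w)"
    by (simp add: inner_diff inner_commute algebra_simps)
  ultimately show ?thesis using \<open>4 \<le> d \<bullet> d\<close> by linarith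
next
  assume "4 * (w \<bullet> w) \<le> (cross w d)\<^sup>2"
  also have "(cross w d)\<^sup>2 = (cross w (d - t *\<^sub>R w))\<^sup>2"
    by (simp add: cross_def algebra_simps)
  also have "\<dots> \<le> (w \<bullet> w) * ((d - t *\<^sub>R w) \<bullet> (d - t *\<^sub>R w))"
    using cross_sq_add_inner_sq[of w "d - t *\<^sub>R w"] zero_le_power2[of "w \<bullet> (d - t *\<^sub>R w)"]
    by linarith
  finally show ?thesis
    using \<open>w \<noteq> 0\<close> by (simp add: mult.commute)
qed

lemma dist_ray_ge_2:
  assumes P: "valid_config P" and \<delta>: "norm \<delta> = 1"
    and angle: "\<forall>u\<in>Delta P. x \<le> dir_angle \<delta> u" and x: "0 \<le> x" "x \<le> pi"
    and "p0 \<in> P" "p \<in> P" "p0 \<noteq> p" and behind: "p \<bullet> \<delta> \<le> p0 \<bullet> \<delta>"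
    and cone: "in_cone \<delta> x w" and "0 \<le> t"
  shows "2 \<le> dist p (p0 + t *\<^sub>R w)"
proof -
  define d where "d = p - p0"
  have fwd: "0 < w \<bullet> \<delta>" and flat: "64 * (cross \<delta> w)\<^sup>2 < (w \<bullet> \<delta>)\<^sup>2"
    and cw: "cos x * norm w < w \<bullet> \<delta>"
    using cone by (simp_all add: in_cone_def)
  have "2 \<le> dist p0 p" using P assms(6-8) by (simp add: valid_config_def)
  then have far: "4 \<le> d \<bullet> d"
    using power_mono[of 2 "dist p0 p" 2] by (simp add: d_def dist_norm power2_norm_eq_inner norm_minus_commute)
  have "d \<bullet> w \<le> 0 \<or> 4 * (w \<bullet> w) \<le> (cross w d)\<^sup>2"
  proof (rule ccontr)
    assume "\<not> ?thesis"
    then have dw: "0 < d \<bullet> w" and near: "(cross w d)\<^sup>2 < 4 * (w \<bullet> w)" by auto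
    have "d \<bullet> \<delta> \<le> 0" using behind by (simp add: d_def inner_diff_left)
    then obtain z where zd: "z \<bullet> \<delta> = w \<bullet> \<delta>" and zw: "z \<bullet> z \<le> w \<bullet> w"
      and tangent: "(cross z d)\<^sup>2 = 4 * (z \<bullet> z)"
      using tangent_direction_exists[OF \<delta> _ far fwd dw near] by blast
    have "(dist p0 p)\<^sup>2 < 8"
      using inner_self_lt_8_if_flat[OF \<delta> \<open>d \<bullet> \<delta> \<le> 0\<close> fwd dw near flat]
      by (simp add: d_def dist_norm power2_norm_eq_inner norm_minus_commute)
    then have "delaunay_nb P p0 p" using delaunay_nb_if_close P assms(6-8) by blast
    moreover have "z \<noteq> 0" using zd fwd by auto
    ultimately have "sgn z \<in> Delta P" using sgn_in_Delta tangent by (simp add: d_def)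
    moreover have "dir_angle \<delta> (sgn z) < x"
    proof (rule dir_angle_less[OF \<delta> _ _ x])
      show "norm (sgn z) = 1" using \<open>z \<noteq> 0\<close> by (simp add: norm_sgn)
      have "norm z \<le> norm w" using zw by (simp add: norm_le)
      then have "cos x * norm z \<le> max 0 (cos x * norm w)"
        by (cases "cos x < 0") (auto simp: mult_le_0_iff intro: mult_left_mono)
      then have "cos x * norm z < w \<bullet> \<delta>" using cw fwd by linarith
      then show "cos x < \<delta> \<bullet> sgn z"
        using \<open>z \<noteq> 0\<close> zd by (simp add: sgn_div_norm inner_commute field_simps)
    qed
    ultimately show False using angle by force
  qed
  moreover have "w \<noteq> 0" using fwd by auto
  ultimately have "4 \<le> (d - t *\<^sub>R w) \<bullet> (d - t *\<^sub>R w)"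
    using inner_ray_ge_4[OF far \<open>0 \<le> t\<close>] by blast
  then have "2\<^sup>2 \<le> (dist p (p0 + t *\<^sub>R w))\<^sup>2"
    by (simp add: d_def dist_norm power2_norm_eq_inner algebra_simps)
  then show ?thesis by (rule power2_le_imp_le) simp
qed

section \<open>The order \<Pi>_\<delta>\<close>

lemma sorted_wrt_ex1:
  assumes "finite A"
    and total: "\<And>x y. x \<in> A \<Longrightarrow> y \<in> A \<Longrightarrow> x \<noteq> y \<Longrightarrow> R x y \<or> R y x"
    and trans: "\<And>x y z. R x y \<Longrightarrow> R y z \<Longrightarrow> R x z" and irrefl: "\<And>x. \<not> R x x"
  shows "\<exists>!xs. distinct xs \<and> set xs = A \<and> sorted_wrt R xs"
proof -
  have "\<exists>xs. distinct xs \<and> set xs = B \<and> sorted_wrt R xs" if "B \<subseteq> A" for B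
  proof -
    have "finite B" using \<open>finite A\<close> that finite_subset by blast
    then show ?thesis using that
    proof (induction B rule: finite_induct)
      case empty then show ?case by auto
    next
      case (insert x B)
      then obtain xs where xs: "distinct xs" "set xs = B" "sorted_wrt R xs" by auto
      define ys zs where "ys = filter (\<lambda>y. R y x) xs" and "zs = filter (\<lambda>y. \<not> R y x) xs"
      have "R x z" if "z \<in> set zs" for z
        using that xs insert total[of x z] by (auto simp: zs_def)
      then have "sorted_wrt R (ys @ [x] @ zs)"
        using xs(3) trans by (auto simp: sorted_wrt_append ys_def zs_def sorted_wrt_filter)
      moreover have "distinct (ys @ [x] @ zs)" "set (ys @ [x] @ zs) = insert x B"
        using xs insert by (auto simp: ys_def zs_def)
      ultimately show ?case by blast
    qed
  qed
  moreover have "xs = ys" if "distinct xs" "sorted_wrt R xs" "distinct ys" "sorted_wrt R ys"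
    "set xs = set ys" for xs ys
    using that
  proof (induction xs arbitrary: ys)
    case Nil then show ?case by simp
  next
    case (Cons a xs)
    then obtain b ys' where ys: "ys = b # ys'" by (cases ys) auto
    have "a = b"
    proof (rule ccontr)
      assume "a \<noteq> b"
      then have "R a b" "R b a" using Cons.prems ys by auto
      then show False using trans irrefl by blast
    qed
    moreover have "set xs = set ys'"
      using Cons.prems ys \<open>a = b\<close> by (metis distinct.simps(2) list.simps(15) Diff_insert_absorb)
    ultimately show ?case using Cons ys by auto
  qed
  ultimately show ?thesis by blast
qed

lemma before_total:
  assumes "norm \<delta> = 1" "p \<noteq> q"
  shows "before \<delta> p q \<or> before \<delta> q p"
proof (rule ccontr)
  assume "\<not> ?thesis"
  then have "(p - q) \<bullet> \<delta> = 0" "cross \<delta> (p - q) = 0"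
    by (auto simp: before_def inner_diff_left cross_eq_inner_perp)
  then have "(p - q) \<bullet> (p - q) = 0" using inner_self_eq_frame[OF assms(1)] by simp
  then show False using \<open>p \<noteq> q\<close> by simp
qed

lemma before_inner_le: "before \<delta> p q \<Longrightarrow> q \<bullet> \<delta> \<le> p \<bullet> \<delta>"
  by (auto simp: before_def)

lemma Pi_ord_sorted:
  assumes "norm \<delta> = 1" "finite C"
  shows "distinct (Pi_ord \<delta> C) \<and> set (Pi_ord \<delta> C) = C \<and> sorted_wrt (before \<delta>) (Pi_ord \<delta> C)"
proof -
  have "\<exists>!xs. distinct xs \<and> set xs = C \<and> sorted_wrt (before \<delta>) xs"
    using before_total[OF assms(1)] by (intro sorted_wrt_ex1 \<open>finite C\<close>) (auto simp: before_def)
  then show ?thesis unfolding Pi_ord_def by (rule theI')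
qed

lemma M_delta_nth:
  assumes "distinct (Pi_ord \<delta> S)" "i < length (Pi_ord \<delta> S)"
  shows "M_delta \<delta> S T (Pi_ord \<delta> S ! i) = Pi_ord \<delta> T ! i"
proof -
  have "(THE j. j < length (Pi_ord \<delta> S) \<and> Pi_ord \<delta> S ! j = Pi_ord \<delta> S ! i) = i"
    using assms by (intro the_equality) (auto simp: nth_eq_iff_index_eq)
  then show ?thesis by (simp add: M_delta_def)
qed

section \<open>Translations inside the cone\<close>

lemma sin_ge_cubic: "0 \<le> x \<Longrightarrow> x - x ^ 3 / 6 \<le> sin (x::real)"
proof -
  assume "0 \<le> x"
  have "\<bar>sin x - (\<Sum>m<3. sin_coeff m * x ^ m)\<bar> \<le> inverse (fact 3) * \<bar>x\<bar> ^ 3"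
    by (rule Maclaurin_sin_bound)
  moreover have "(\<Sum>m<3. sin_coeff m * x ^ m) = x"
    by (simp add: sin_coeff_def numeral_3_eq_3 lessThan_Suc)
  moreover have "inverse (fact 3) * \<bar>x\<bar> ^ 3 = x ^ 3 / 6"
    using \<open>0 \<le> x\<close> by (simp add: fact_numeral)
  ultimately have "\<bar>sin x - x\<bar> \<le> x ^ 3 / 6" by simp
  then show ?thesis by linarith
qed

lemma one_le_sin_pi_div:
  assumes "1 \<le> n"
  shows "1 \<le> 8 * real n * sin (pi / (24 * real n))"
proof -
  define x where "x = pi / (24 * real n)"
  have x: "0 < x" "x \<le> pi / 24" using assms by (auto simp: x_def field_simps)
  have "x\<^sup>2 \<le> (3.2 / 24)\<^sup>2" using x pi_approx by (intro power_mono) auto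
  also have "\<dots> \<le> 0.02" by (simp add: power2_eq_square)
  finally have "3.14 / 3 * (1 - 0.02 / 6) \<le> (pi / 3) * (1 - x\<^sup>2 / 6)"
    using pi_approx by (intro mult_mono) auto
  also have "(pi / 3) * (1 - x\<^sup>2 / 6) = 8 * real n * (x - x ^ 3 / 6)"
    using assms by (simp add: x_def power2_eq_square power3_eq_cube field_simps)
  also have "\<dots> \<le> 8 * real n * sin x"
    using sin_ge_cubic[of x] x by (intro mult_left_mono) auto
  finally show ?thesis by (simp add: x_def)
qed

lemma in_cone_if_flat:
  assumes \<delta>: "norm \<delta> = 1" and n: "1 \<le> n" and flat: "8 * real n * \<bar>cross \<delta> w\<bar> < w \<bullet> \<delta>"
  shows "in_cone \<delta> (pi / (24 * real n)) w"
proof -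
  define x W1 W2 where "x = pi / (24 * real n)" and "W1 = w \<bullet> \<delta>" and "W2 = cross \<delta> w"
  have x: "0 < x" "x \<le> pi / 2" using n by (auto simp: x_def field_simps)
  have "8 * \<bar>W2\<bar> \<le> 8 * real n * \<bar>W2\<bar>" using n by (simp add: mult_right_mono)
  with flat have W2: "8 * \<bar>W2\<bar> < W1" by (simp add: W1_def W2_def)
  then have "0 < W1" by linarith
  have "(8 * \<bar>W2\<bar>)\<^sup>2 < W1\<^sup>2" using W2 by (intro power_strict_mono) auto
  then have slope: "64 * W2\<^sup>2 < W1\<^sup>2" by (simp add: power_mult_distrib)
  have "cos x * \<bar>W2\<bar> \<le> \<bar>W2\<bar>" using x by (intro mult_left_le_one_le) (auto simp: cos_ge_zero)
  also have "\<dots> \<le> (8 * real n * sin x) * \<bar>W2\<bar>"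
    using mult_right_mono[OF one_le_sin_pi_div[OF n] abs_ge_zero[of W2]] by (simp add: x_def)
  also have "\<dots> = sin x * (8 * real n * \<bar>W2\<bar>)" by simp
  also have "\<dots> < sin x * W1"
    using flat x by (intro mult_strict_left_mono) (auto simp: W1_def W2_def sin_gt_zero)
  finally have "(cos x * \<bar>W2\<bar>)\<^sup>2 < (sin x * W1)\<^sup>2"
    using x by (intro power_strict_mono) (auto simp: cos_ge_zero)
  then have "(cos x)\<^sup>2 * (W1\<^sup>2 + W2\<^sup>2) < W1\<^sup>2"
    using sin_squared_eq[of x] by (simp add: power_mult_distrib algebra_simps)
  then have "(cos x * sqrt (W1\<^sup>2 + W2\<^sup>2))\<^sup>2 < W1\<^sup>2" by (simp add: power_mult_distrib)
  then have "cos x * sqrt (W1\<^sup>2 + W2\<^sup>2) < W1"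
    by (rule power_less_imp_less_base) (use \<open>0 < W1\<close> in simp)
  moreover have "norm w = sqrt (W1\<^sup>2 + W2\<^sup>2)"
    using inner_self_eq_frame[OF \<delta>, of w] by (simp add: W1_def W2_def norm_eq_sqrt_inner)
  ultimately show ?thesis
    using \<open>0 < W1\<close> slope by (simp add: in_cone_def x_def W1_def W2_def)
qed

lemma in_cone_translate:
  assumes \<delta>: "norm \<delta> = 1" and n: "1 \<le> n" and y: "norm y \<le> R"
  shows "in_cone \<delta> (pi / (24 * real n)) (((R + 2) * (1 + 8 * real n)) *\<^sub>R \<delta> + y)"
proof -
  define w where "w = ((R + 2) * (1 + 8 * real n)) *\<^sub>R \<delta> + y"
  have "\<delta> \<bullet> \<delta> = 1" "cross \<delta> \<delta> = 0"
    using \<delta> by (simp_all add: norm_eq_1[symmetric] cross_def)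
  then have w: "w \<bullet> \<delta> = R + 2 + 8 * real n * R + 16 * real n + y \<bullet> \<delta>" "cross \<delta> w = cross \<delta> y"
    by (simp_all add: w_def inner_add_left cross_def algebra_simps)
  have "\<bar>y \<bullet> \<delta>\<bar> \<le> R" "\<bar>cross \<delta> y\<bar> \<le> R"
    using Cauchy_Schwarz_ineq2[of y \<delta>] Cauchy_Schwarz_ineq2[of y "perp \<delta>"] \<delta> y
    by (simp_all add: cross_eq_inner_perp)
  then have "8 * real n * \<bar>cross \<delta> w\<bar> \<le> 8 * real n * R" "- R \<le> y \<bullet> \<delta>"
    by (auto simp: w intro: mult_left_mono)
  then have "8 * real n * \<bar>cross \<delta> w\<bar> < w \<bullet> \<delta>"
    using n w(1) by linarith
  then show ?thesis unfolding w_def by (rule in_cone_if_flat[OF \<delta> n])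
qed

section \<open>Valid itineraries\<close>

lemma convex_hull_discs_disjoint:
  assumes far: "\<forall>z\<in>closed_segment a b. 2 \<le> dist p z"
  shows "convex hull (D a \<union> D b) \<inter> D p = {}"
proof -
  let ?N = "\<Union>z\<in>closed_segment a b. \<Union>e\<in>ball 0 1. {z + e}"
  have "ball c 1 \<subseteq> ?N" if "c \<in> closed_segment a b" for c
  proof
    fix y assume "y \<in> ball c 1"
    then show "y \<in> ?N"
      using that by (intro UN_I[of c] UN_I[of "y - c"]) (auto simp: dist_norm norm_minus_commute)
  qed
  then have "convex hull (D a \<union> D b) \<subseteq> ?N"
    unfolding D_def by (intro hull_minimal convex_sums convex_closed_segment convex_ball) auto
  moreover have "y \<notin> D p" if "y \<in> ?N" for y
  proof -
    obtain z e where "z \<in> closed_segment a b" "norm e < 1" "y = z + e" using \<open>y \<in> ?N\<close> by auto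
    then have "2 \<le> dist p y + norm e"
      using far dist_triangle[of p z y] by (auto simp: dist_norm)
    then show ?thesis using \<open>norm e < 1\<close> by (simp add: D_def)
  qed
  ultimately show ?thesis by blast
qed

lemma valid_itinerary_if_segments_far:
  assumes "\<And>i j. i < j \<Longrightarrow> j < length ss \<Longrightarrow>
      \<forall>z\<in>closed_segment (ss ! i) (M (ss ! i) + v). 2 \<le> dist (ss ! j) z"
    and "\<And>i j. j < i \<Longrightarrow> i < length ss \<Longrightarrow>
      \<forall>z\<in>closed_segment (ss ! i) (M (ss ! i) + v). 2 \<le> dist (M (ss ! j) + v) z"
  shows "valid_itinerary M v ss"
  using assms by (simp add: valid_itinerary_def convex_hull_discs_disjoint)

lemma closed_segment_far:
  assumes P: "valid_config P" and \<delta>: "norm \<delta> = 1"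
    and angle: "\<forall>u\<in>Delta P. x \<le> dir_angle \<delta> u" and x: "0 \<le> x" "x \<le> pi"
    and "p0 \<in> P" "p \<in> P" "p0 \<noteq> p" and behind: "p \<bullet> \<delta> \<le> p0 \<bullet> \<delta>"
    and cone: "in_cone \<delta> x (q - p0)"
  shows "\<forall>z\<in>closed_segment p0 q. 2 \<le> dist p z"
proof
  fix z assume "z \<in> closed_segment p0 q"
  then obtain u where "0 \<le> u" "z = p0 + u *\<^sub>R (q - p0)"
    by (auto simp: in_segment algebra_simps)
  then show "2 \<le> dist p z" using dist_ray_ge_2[OF assms] by simp
qed

lemma valid_itinerary_Pi_ord:
  assumes S: "valid_config S" and T: "valid_config T" and card: "card S = card T"
    and \<delta>: "norm \<delta> = 1" and x: "0 \<le> x" "x \<le> pi"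
    and angle: "\<forall>u\<in>Delta S \<union> Delta T. x \<le> dir_angle \<delta> u"
    and cone: "\<And>i. i < card S \<Longrightarrow> in_cone \<delta> x (Pi_ord \<delta> T ! i + v - Pi_ord \<delta> S ! i)"
  shows "valid_itinerary (M_delta \<delta> S T) v (Pi_ord \<delta> S)"
proof -
  define ss tt where "ss = Pi_ord \<delta> S" and "tt = Pi_ord \<delta> T"
  have ss: "distinct ss" "set ss = S" "sorted_wrt (before \<delta>) ss"
    and tt: "distinct tt" "set tt = T" "sorted_wrt (before \<delta>) tt"
    using Pi_ord_sorted[OF \<delta>] S T by (simp_all add: valid_config_def ss_def tt_def)
  have len: "length ss = card S" "length tt = card S"
    using distinct_card[OF ss(1)] distinct_card[OF tt(1)] ss(2) tt(2) card by simp_all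
  have M: "M_delta \<delta> S T (ss ! i) = tt ! i" if "i < card S" for i
    using M_delta_nth[of \<delta> S i T] ss(1) that len by (simp add: ss_def tt_def)
  have cone: "in_cone \<delta> x (tt ! i + v - ss ! i)" if "i < card S" for i
    using cone[OF that] by (simp add: ss_def tt_def)
  have angle_T: "\<forall>u\<in>Delta T. x \<le> dir_angle (- \<delta>) u"
  proof
    fix u assume "u \<in> Delta T"
    then have "x \<le> dir_angle \<delta> (- u)" using angle uminus_in_Delta by blast
    then show "x \<le> dir_angle (- \<delta>) u" by (simp add: dir_angle_def)
  qed
  show ?thesis unfolding ss_def[symmetric]
  proof (rule valid_itinerary_if_segments_far)
    fix i j assume "i < j" "j < length ss"
    then have "ss ! i \<in> S" "ss ! j \<in> S" "ss ! i \<noteq> ss ! j" "ss ! j \<bullet> \<delta> \<le> ss ! i \<bullet> \<delta>"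
      using ss before_inner_le[OF sorted_wrt_nth_less[OF ss(3) \<open>i < j\<close>]]
      by (auto simp: nth_eq_iff_index_eq)
    then show "\<forall>z\<in>closed_segment (ss ! i) (M_delta \<delta> S T (ss ! i) + v). 2 \<le> dist (ss ! j) z"
      using closed_segment_far[OF S \<delta> _ x, of "ss ! i" "ss ! j" "tt ! i + v"] angle cone[of i] M[of i]
        \<open>i < j\<close> \<open>j < length ss\<close> len by simp
  next
    fix i j assume "j < i" "i < length ss"
    then have "tt ! i \<in> T" "tt ! j \<in> T" "tt ! i \<noteq> tt ! j" "tt ! j \<bullet> - \<delta> \<le> tt ! i \<bullet> - \<delta>"
      using tt len before_inner_le[OF sorted_wrt_nth_less[OF tt(3) \<open>j < i\<close>]]
      by (auto simp: nth_eq_iff_index_eq)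
    moreover have "in_cone (- \<delta>) x (ss ! i - v - tt ! i)"
      using in_cone_uminus[of \<delta> x "tt ! i + v - ss ! i"] cone[of i] \<open>i < length ss\<close> len
      by (simp add: algebra_simps)
    ultimately have "\<forall>z\<in>closed_segment (tt ! i) (ss ! i - v). 2 \<le> dist (tt ! j) z"
      using closed_segment_far[OF T _ angle_T x] \<delta> by simp
    moreover have "closed_segment (ss ! i) (tt ! i + v) = (+) v ` closed_segment (tt ! i) (ss ! i - v)"
      using closed_segment_translation[of v "tt ! i" "ss ! i - v"]
      by (simp add: closed_segment_commute add.commute)
    ultimately show "\<forall>z\<in>closed_segment (ss ! i) (M_delta \<delta> S T (ss ! i) + v).
        2 \<le> dist (M_delta \<delta> S T (ss ! j) + v) z"
      using M \<open>j < i\<close> \<open>i < length ss\<close> len by (auto simp: add.commute[of _ v])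
  qed
qed

theorem mainTheorem6:
  fixes S T :: "point set" and n :: nat and \<delta> :: point
  assumes "valid_config S" and "valid_config T"
    and "card S = n" and "card T = n" and "n \<ge> 2"
    and "sed_center S 0" and "sed_center T 0"
    and "norm \<delta> = 1"
    and "\<forall>u \<in> Delta S \<union> Delta T. dir_angle \<delta> u \<ge> pi / (24 * real n)"
  shows "valid_translation S (M_delta \<delta> S T) (((rad S + rad T + 2) * (1 + 8 * real n)) *\<^sub>R \<delta>)
       \<and> valid_itinerary (M_delta \<delta> S T) (((rad S + rad T + 2) * (1 + 8 * real n)) *\<^sub>R \<delta>)
            (Pi_ord \<delta> S)"
proof -
  define v where "v = ((rad S + rad T + 2) * (1 + 8 * real n)) *\<^sub>R \<delta>"
  have sorted: "distinct (Pi_ord \<delta> C) \<and> set (Pi_ord \<delta> C) = C \<and> length (Pi_ord \<delta> C) = card C"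
    if "valid_config C" for C
    using Pi_ord_sorted[OF assms(8)] distinct_card that by (metis valid_config_def)
  have x: "0 \<le> pi / (24 * real n)" "pi / (24 * real n) \<le> pi" using assms(5) by (auto simp: field_simps)
  have cone: "in_cone \<delta> (pi / (24 * real n)) (Pi_ord \<delta> T ! i + v - Pi_ord \<delta> S ! i)" if "i < n" for i
  proof -
    have "Pi_ord \<delta> S ! i \<in> S" "Pi_ord \<delta> T ! i \<in> T"
      using sorted[OF assms(1)] sorted[OF assms(2)] that assms(3,4) by (metis nth_mem)+
    then have "norm (Pi_ord \<delta> T ! i - Pi_ord \<delta> S ! i) \<le> rad S + rad T"
      using assms(6,7) norm_triangle_ineq4[of "Pi_ord \<delta> T ! i" "Pi_ord \<delta> S ! i"]
      by (force simp: sed_center_def)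
    then have "in_cone \<delta> (pi / (24 * real n))
        (((rad S + rad T + 2) * (1 + 8 * real n)) *\<^sub>R \<delta> + (Pi_ord \<delta> T ! i - Pi_ord \<delta> S ! i))"
      using assms(5) by (intro in_cone_translate[OF assms(8)]) auto
    then show ?thesis by (simp add: v_def algebra_simps)
  qed
  have "valid_itinerary (M_delta \<delta> S T) v (Pi_ord \<delta> S)"
    using valid_itinerary_Pi_ord[OF assms(1,2) _ assms(8) x assms(9)] cone assms(3,4) by simp
  then show ?thesis
    using sorted[OF assms(1)] by (auto simp: v_def valid_translation_def)
qed

end
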